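(* For any complex numbers $a,b,\alpha,\beta,\theta$ with $\beta a-\alpha b\neq0$, any natural number $n\ge1$, and any integer $k\ge0$ (with $k\le\lfloor n/2\rfloor$ in the first identity and $k\le\lfloor (n-1)/2\rfloor$ in the second), \[ \sum_{r=k}^{\lfloor n/2\rfloor}\binom{r}{k}\Psi\left(\begin{array}{cc|c} a & b & n \\ \alpha & \beta & r \end{array}\right)\theta^{r-k}=\Psi\left(\begin{array}{cc|c} a-\alpha\theta & b-\beta\theta & n \\ \alpha & \beta & k \end{array}\right), \] \[ \sum_{r=k}^{\lfloor (n-1)/2\rfloor}\binom{r}{k}\Phi\left(\begin{array}{cc|c} a & b & n \\ \alpha & \beta & r \end{array}\right)\theta^{r-k}=\Phi\left(\begin{array}{cc|c} a-\alpha\theta & b-\beta\theta & n \\ \alpha & \beta & k \end{array}\right). \]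
   Context: $\delta(m)=1$ for $m$ odd, $0$ for $m$ even; $\lfloor\cdot\rfloor$ is the floor. For indeterminates $a,b,\alpha,\beta$ and $n\ge1$, $\Psi\left(\begin{array}{cc|c} a & b & n \\ \alpha & \beta & r \end{array}\right)$ ($0\le r\le\lfloor n/2\rfloor$) and $\Phi\left(\begin{array}{cc|c} a & b & n \\ \alpha & \beta & r \end{array}\right)$ ($0\le r\le\lfloor (n-1)/2\rfloor$) are the unique polynomials in $\mathbb{Z}[a,b,\alpha,\beta]$ such that, identically in $x,y$, $(\beta a-\alpha b)^{\lfloor n/2\rfloor}\frac{x^n+y^n}{(x+y)^{\delta(n)}}=\sum_{r}\Psi\left(\begin{array}{cc|c} a & b & n \\ \alpha & \beta & r \end{array}\right)(\alpha x^2+\beta xy+\alpha y^2)^{\lfloor n/2\rfloor-r}(ax^2+bxy+ay^2)^r$ and $(\beta a-\alpha b)^{\lfloor (n-1)/2\rfloor}\frac{x^n-y^n}{(x-y)(x+y)^{\delta(n-1)}}=\sum_{r}\Phi\left(\begin{array}{cc|c} a & b & n \\ \alpha & \beta & r \end{array}\right)(\alpha x^2+\beta xy+\alpha y^2)^{\lfloor (n-1)/2\rfloor-r}(ax^2+bxy+ay^2)^r$; for numerical arguments these polynomials are evaluated. *)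

theory Defs
  imports Complex_Main
begin

definition delta :: "nat \<Rightarrow> nat" where
  "delta m = (if odd m then 1 else 0)"

text \<open>Coefficient sequences (indexed by r, zero beyond the top index) realising the
  defining identities; the division by (x+y)^delta resp. (x-y)(x+y)^delta is
  cleared by multiplying through (equivalent as polynomial identities).\<close>

definition Psi :: "complex \<Rightarrow> complex \<Rightarrow> complex \<Rightarrow> complex \<Rightarrow> nat \<Rightarrow> nat \<Rightarrow> complex" where
  "Psi a b \<alpha> \<beta> n = (THE c. (\<forall>r > n div 2. c r = 0) \<and>
     (\<forall>x y :: complex. (\<beta>*a - \<alpha>*b) ^ (n div 2) * (x ^ n + y ^ n) =
        (x + y) ^ delta n * (\<Sum>r = 0..n div 2. c r * (\<alpha>*x^2 + \<beta>*x*y + \<alpha>*y^2) ^ (n div 2 - r)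
                                             * (a*x^2 + b*x*y + a*y^2) ^ r)))"

definition Phi :: "complex \<Rightarrow> complex \<Rightarrow> complex \<Rightarrow> complex \<Rightarrow> nat \<Rightarrow> nat \<Rightarrow> complex" where
  "Phi a b \<alpha> \<beta> n = (THE c. (\<forall>r > (n - 1) div 2. c r = 0) \<and>
     (\<forall>x y :: complex. (\<beta>*a - \<alpha>*b) ^ ((n - 1) div 2) * (x ^ n - y ^ n) =
        (x - y) * (x + y) ^ delta (n - 1) *
          (\<Sum>r = 0..(n - 1) div 2. c r * (\<alpha>*x^2 + \<beta>*x*y + \<alpha>*y^2) ^ ((n - 1) div 2 - r)
                                      * (a*x^2 + b*x*y + a*y^2) ^ r)))"

end

theory Submission
  imports Defs
begin

text \<open>Write \<open>Q = \<alpha>x\<^sup>2 + \<beta>xy + \<alpha>y\<^sup>2\<close>, \<open>P = ax\<^sup>2 + bxy + ay\<^sup>2\<close> and \<open>D = \<beta>a - \<alpha>b\<close>. Then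
  \<open>D(x\<^sup>2 + y\<^sup>2) = \<beta>P - bQ\<close> and \<open>Dxy = aQ - \<alpha>P\<close>. The quotients of \<open>x\<^sup>n \<plusminus> y\<^sup>n\<close> in the
  defining identities satisfy a Lucas-type recurrence in \<open>x\<^sup>2 + y\<^sup>2\<close> and \<open>(xy)\<^sup>2\<close>, so \<open>D\<^sup>m\<close> times
  them is a binary form of degree \<open>m\<close> in \<open>Q\<close> and \<open>P\<close>. For \<open>D \<noteq> 0\<close> its coefficients are
  unique, since \<open>(Q, P)\<close> takes the value \<open>(1, p)\<close> off the lines \<open>x = \<plusminus>y\<close> for all but
  finitely many \<open>p\<close>. Replacing \<open>(a, b)\<close> by \<open>(a - \<alpha>\<theta>, b - \<beta>\<theta>)\<close> keeps \<open>D\<close> and \<open>Q\<close> and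
  turns \<open>P\<close> into \<open>P' = P - \<theta>Q\<close>; expanding \<open>P\<^sup>r = (P' + \<theta>Q)\<^sup>r\<close> binomially shows that the new
  coefficients are the Taylor shift of the old ones, which is the claimed identity.\<close>

definition binary_form :: "(nat \<Rightarrow> 'a) \<Rightarrow> nat \<Rightarrow> 'a \<Rightarrow> 'a \<Rightarrow> 'a::comm_semiring_1" where
  "binary_form c m q p = (\<Sum>r = 0..m. c r * q ^ (m - r) * p ^ r)"

lemma binary_form_Suc_q: "binary_form (c(Suc m := 0)) (Suc m) q p = q * binary_form c m q p"
proof -
  have "binary_form (c(Suc m := 0)) (Suc m) q p = (\<Sum>r = 0..m. q * (c r * q ^ (m - r) * p ^ r))"
    unfolding binary_form_def by (auto simp: Suc_diff_le mult_ac intro!: sum.cong)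
  then show ?thesis
    by (simp add: binary_form_def sum_distrib_left)
qed

lemma binary_form_Suc_p: "binary_form (case_nat 0 c) (Suc m) q p = p * binary_form c m q p"
  unfolding binary_form_def
  by (subst sum.atLeast0_atMost_Suc_shift)
     (simp add: sum_distrib_left mult_ac del: sum.atLeast0_atMost_Suc)

lemma binary_form_lincomb:
  "binary_form (\<lambda>r. s * c r + t * d r) m q p = s * binary_form c m q p + t * binary_form d m q p"
  unfolding binary_form_def by (simp add: sum.distrib sum_distrib_left algebra_simps)

lemma binary_form_diff:
  fixes c d :: "nat \<Rightarrow> 'a::comm_ring_1"
  shows "binary_form (\<lambda>r. c r - d r) m q p = binary_form c m q p - binary_form d m q p"
  unfolding binary_form_def by (simp add: sum_subtractf left_diff_distrib)

definition taylor_shift :: "'a \<Rightarrow> nat \<Rightarrow> (nat \<Rightarrow> 'a) \<Rightarrow> nat \<Rightarrow> 'a::comm_semiring_1" where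
  "taylor_shift \<theta> m c k = (\<Sum>r = k..m. of_nat (r choose k) * c r * \<theta> ^ (r - k))"

lemma taylor_shift_eq_0: "m < k \<Longrightarrow> taylor_shift \<theta> m c k = 0"
  by (simp add: taylor_shift_def)

lemma binary_form_taylor_shift:
  "binary_form c m q (p + \<theta> * q) = binary_form (taylor_shift \<theta> m c) m q p"
proof -
  define t where "t r k = of_nat (r choose k) * c r * \<theta> ^ (r - k) * q ^ (m - k) * p ^ k" for r k
  have "c r * q ^ (m - r) * (p + \<theta> * q) ^ r = (\<Sum>k\<in>{k \<in> {0..m}. k \<le> r}. t r k)"
    if "r \<le> m" for r
  proof -
    have "c r * q ^ (m - r) * (p + \<theta> * q) ^ r
        = (\<Sum>k\<le>r. of_nat (r choose k) * c r * \<theta> ^ (r - k) * (q ^ (m - r) * q ^ (r - k)) * p ^ k)"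
      by (simp add: binomial_ring sum_distrib_left power_mult_distrib mult_ac)
    also have "\<dots> = (\<Sum>k\<le>r. t r k)"
      using that by (intro sum.cong) (simp_all add: t_def flip: power_add)
    also have "{..r} = {k \<in> {0..m}. k \<le> r}"
      using that by auto
    finally show ?thesis .
  qed
  then have "binary_form c m q (p + \<theta> * q) = (\<Sum>r\<in>{0..m}. \<Sum>k\<in>{k \<in> {0..m}. k \<le> r}. t r k)"
    unfolding binary_form_def by (intro sum.cong) auto
  also have "\<dots> = (\<Sum>k\<in>{0..m}. \<Sum>r\<in>{r \<in> {0..m}. k \<le> r}. t r k)"
    by (rule sum.swap_restrict) auto
  also have "\<dots> = binary_form (taylor_shift \<theta> m c) m q p"
    unfolding binary_form_def taylor_shift_def t_def
    by (intro sum.cong refl) (auto simp: sum_distrib_right intro!: sum.cong)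
  finally show ?thesis .
qed

definition is_binary_form ::
    "nat \<Rightarrow> ('a \<Rightarrow> 'a \<Rightarrow> 'a) \<Rightarrow> ('a \<Rightarrow> 'a \<Rightarrow> 'a) \<Rightarrow> ('a \<Rightarrow> 'a \<Rightarrow> 'a::comm_semiring_1) \<Rightarrow> bool" where
  "is_binary_form m q p f \<longleftrightarrow> (\<exists>c. \<forall>x y. f x y = binary_form c m (q x y) (p x y))"

lemma is_binary_form_const: "is_binary_form 0 q p (\<lambda>x y. g)"
  unfolding is_binary_form_def binary_form_def by (rule exI[of _ "\<lambda>_. g"]) simp

lemma is_binary_form_mult_q:
  assumes "is_binary_form m q p f"
  shows "is_binary_form (Suc m) q p (\<lambda>x y. q x y * f x y)"
proof -
  from assms obtain c where "\<And>x y. f x y = binary_form c m (q x y) (p x y)"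
    unfolding is_binary_form_def by blast
  then show ?thesis
    unfolding is_binary_form_def by (intro exI[of _ "c(Suc m := 0)"]) (simp add: binary_form_Suc_q)
qed

lemma is_binary_form_mult_p:
  assumes "is_binary_form m q p f"
  shows "is_binary_form (Suc m) q p (\<lambda>x y. p x y * f x y)"
proof -
  from assms obtain c where "\<And>x y. f x y = binary_form c m (q x y) (p x y)"
    unfolding is_binary_form_def by blast
  then show ?thesis
    unfolding is_binary_form_def by (intro exI[of _ "case_nat 0 c"]) (simp add: binary_form_Suc_p)
qed

lemma is_binary_form_lincomb:
  assumes "is_binary_form m q p f" "is_binary_form m q p g"
    and "\<And>x y. h x y = s * f x y + t * g x y"
  shows "is_binary_form m q p h"
proof -
  from assms(1,2) obtain c d where
    "\<And>x y. f x y = binary_form c m (q x y) (p x y)" "\<And>x y. g x y = binary_form d m (q x y) (p x y)"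
    unfolding is_binary_form_def by metis
  with assms(3) show ?thesis
    unfolding is_binary_form_def
    by (intro exI[of _ "\<lambda>r. s * c r + t * d r"]) (simp add: binary_form_lincomb)
qed

definition sym_quad :: "'a \<Rightarrow> 'a \<Rightarrow> 'a \<Rightarrow> 'a \<Rightarrow> 'a::comm_semiring_1" where
  "sym_quad a b x y = a * x\<^sup>2 + b * x * y + a * y\<^sup>2"

lemma sym_quad_eq: "sym_quad a b x y = a * (x\<^sup>2 + y\<^sup>2) + b * (x * y)"
  unfolding sym_quad_def by (simp add: algebra_simps)

lemma is_binary_form_mult_sum_squares:
  fixes a b \<alpha> \<beta> :: "'a::comm_ring_1"
  assumes "is_binary_form m (sym_quad \<alpha> \<beta>) (sym_quad a b) f"
  shows "is_binary_form (Suc m) (sym_quad \<alpha> \<beta>) (sym_quad a b)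
           (\<lambda>x y. (\<beta> * a - \<alpha> * b) * (x\<^sup>2 + y\<^sup>2) * f x y)"
  by (rule is_binary_form_lincomb[where s = \<beta> and t = "-b",
        OF is_binary_form_mult_p[OF assms] is_binary_form_mult_q[OF assms]])
     (simp add: sym_quad_def algebra_simps)

lemma is_binary_form_mult_prod:
  fixes a b \<alpha> \<beta> :: "'a::comm_ring_1"
  assumes "is_binary_form m (sym_quad \<alpha> \<beta>) (sym_quad a b) f"
  shows "is_binary_form (Suc m) (sym_quad \<alpha> \<beta>) (sym_quad a b)
           (\<lambda>x y. (\<beta> * a - \<alpha> * b) * (x * y) * f x y)"
  by (rule is_binary_form_lincomb[where s = a and t = "-\<alpha>",
        OF is_binary_form_mult_q[OF assms] is_binary_form_mult_p[OF assms]])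
     (simp add: sym_quad_def algebra_simps power2_eq_square)

fun lucas_seq :: "'a \<Rightarrow> 'a \<Rightarrow> 'a \<Rightarrow> 'a \<Rightarrow> nat \<Rightarrow> 'a::comm_ring_1" where
  "lucas_seq g0 g1 u w 0 = g0"
| "lucas_seq g0 g1 u w (Suc 0) = g1"
| "lucas_seq g0 g1 u w (Suc (Suc m)) = u * lucas_seq g0 g1 u w (Suc m) - w * lucas_seq g0 g1 u w m"

lemma lucas_seq_eqI:
  assumes "F 0 = c * g0" "F (Suc 0) = c * g1"
    and "\<And>m. F (Suc (Suc m)) = u * F (Suc m) - w * F m"
  shows "F m = c * lucas_seq g0 g1 u w m"
proof -
  have "F m = c * lucas_seq g0 g1 u w m \<and> F (Suc m) = c * lucas_seq g0 g1 u w (Suc m)"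
    by (induction m) (simp_all add: assms right_diff_distrib mult.left_commute)
  then show ?thesis ..
qed

lemma is_binary_form_lucas_seq:
  fixes a b \<alpha> \<beta> :: "'a::comm_ring_1"
  assumes g1: "\<And>x y. g1 x y = s * (x\<^sup>2 + y\<^sup>2) + t * (x * y)"
  shows "is_binary_form m (sym_quad \<alpha> \<beta>) (sym_quad a b)
           (\<lambda>x y. (\<beta> * a - \<alpha> * b) ^ m * lucas_seq g0 (g1 x y) (x\<^sup>2 + y\<^sup>2) ((x * y)\<^sup>2) m)"
    (is "?form m")
proof -
  have "?form m \<and> ?form (Suc m)"
  proof (induction m)
    case 0
    have "?form (Suc 0)"
      by (rule is_binary_form_lincomb[where s = s and t = t,
            OF is_binary_form_mult_sum_squares is_binary_form_mult_prod,
            OF is_binary_form_const[of _ _ 1] is_binary_form_const[of _ _ 1]])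
         (simp add: g1 distrib_left mult_ac)
    then show ?case
      using is_binary_form_const[of "sym_quad \<alpha> \<beta>" "sym_quad a b" g0] by simp
  next
    case (Suc m)
    \<comment> \<open>with \<open>D\<close> abstracted: expanding \<open>\<beta> * a - \<alpha> * b\<close> here overwhelms the simplifier\<close>
    have recurrence: "D ^ Suc (Suc m) * (u * A - v\<^sup>2 * B)
        = 1 * (D * u * (D ^ Suc m * A)) + -1 * (D * v * (D * v * (D ^ m * B)))" for D u v A B :: 'a
      by (simp add: algebra_simps power2_eq_square)
    have "?form (Suc (Suc m))"
      by (rule is_binary_form_lincomb[where s = 1 and t = "-1",
            OF is_binary_form_mult_sum_squares[OF Suc[THEN conjunct2]]
               is_binary_form_mult_prod[OF is_binary_form_mult_prod[OF Suc[THEN conjunct1]]]])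
         (simp only: lucas_seq.simps recurrence)
    with Suc show ?case by simp
  qed
  then show ?thesis ..
qed

lemma even_power_sum_lucas_seq:
  "x ^ (2 * m) + y ^ (2 * m) = lucas_seq 2 (x\<^sup>2 + y\<^sup>2) (x\<^sup>2 + y\<^sup>2) ((x * y)\<^sup>2) m"
  by (rule lucas_seq_eqI[where c = 1, simplified])
     (auto simp: algebra_simps power_add power_mult_distrib power2_eq_square power_mult)

lemma odd_power_sum_lucas_seq:
  "x ^ (2 * m + 1) + y ^ (2 * m + 1)
     = (x + y) * lucas_seq 1 (x\<^sup>2 + y\<^sup>2 - x * y) (x\<^sup>2 + y\<^sup>2) ((x * y)\<^sup>2) m"
  by (rule lucas_seq_eqI)
     (auto simp: algebra_simps power_add power_mult_distrib power2_eq_square power_mult)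

lemma odd_power_diff_lucas_seq:
  "x ^ (2 * m + 1) - y ^ (2 * m + 1)
     = (x - y) * lucas_seq 1 (x\<^sup>2 + y\<^sup>2 + x * y) (x\<^sup>2 + y\<^sup>2) ((x * y)\<^sup>2) m"
  by (rule lucas_seq_eqI)
     (auto simp: algebra_simps power_add power_mult_distrib power2_eq_square power_mult)

lemma even_power_diff_lucas_seq:
  "x ^ (2 * m + 2) - y ^ (2 * m + 2)
     = ((x - y) * (x + y)) * lucas_seq 1 (x\<^sup>2 + y\<^sup>2) (x\<^sup>2 + y\<^sup>2) ((x * y)\<^sup>2) m"
  by (rule lucas_seq_eqI)
     (auto simp: algebra_simps power_add power_mult_distrib power2_eq_square power_mult)

lemma sum_squares_prod_surj:
  fixes u v :: complex
  obtains x y where "x\<^sup>2 + y\<^sup>2 = u" "x * y = v"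
proof
  define e w where "e = csqrt (u + 2 * v)" and "w = csqrt (u - 2 * v)"
  have "e\<^sup>2 = u + 2 * v" "w\<^sup>2 = u - 2 * v"
    unfolding e_def w_def by simp_all
  then show "((e + w) / 2)\<^sup>2 + ((e - w) / 2)\<^sup>2 = u" "(e + w) / 2 * ((e - w) / 2) = v"
    by (simp_all add: field_simps power2_eq_square)
qed

lemma finite_linear_solutions:
  fixes A B :: complex
  assumes "A \<noteq> 0 \<or> B \<noteq> 0"
  shows "finite {p. A * p = B}"
proof (cases "A = 0")
  case False
  then have "{p. A * p = B} = {B / A}"
    by (auto simp: field_simps)
  then show ?thesis by simp
qed (use assms in simp)

lemma binary_form_sym_quad_eq_0D:
  fixes a b \<alpha> \<beta> :: complex
  assumes nondeg: "\<beta> * a - \<alpha> * b \<noteq> 0"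
    and vanish: "\<And>x y. x + y \<noteq> 0 \<Longrightarrow> x - y \<noteq> 0 \<Longrightarrow>
                   binary_form c m (sym_quad \<alpha> \<beta> x y) (sym_quad a b x y) = 0"
    and "r \<le> m"
  shows "c r = 0"
proof -
  define D where "D = \<beta> * a - \<alpha> * b"
  have "D \<noteq> 0"
    using assms by (simp add: D_def)
  define S where "S = {p. (\<beta> - 2 * \<alpha>) * p = b - 2 * a} \<union> {p. (\<beta> + 2 * \<alpha>) * p = b + 2 * a}"
  have "finite S"
    unfolding S_def using nondeg
    by (intro finite_UnI finite_linear_solutions) (auto simp: algebra_simps add_eq_0_iff2)
  have "(\<Sum>i\<le>m. c i * p ^ i) = 0" if "p \<notin> S" for p
  proof -
    obtain x y where xy: "x\<^sup>2 + y\<^sup>2 = (\<beta> * p - b) / D" "x * y = (a - \<alpha> * p) / D"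
      by (rule sum_squares_prod_surj)
    have "D * sym_quad \<alpha> \<beta> x y = D * 1" "D * sym_quad a b x y = D * p"
      using \<open>D \<noteq> 0\<close> unfolding sym_quad_eq xy
      by (simp_all add: field_simps) (simp_all add: D_def algebra_simps)
    then have Q: "sym_quad \<alpha> \<beta> x y = 1" and P: "sym_quad a b x y = p"
      using \<open>D \<noteq> 0\<close> by simp_all
    have "(x + y)\<^sup>2 = ((\<beta> - 2 * \<alpha>) * p - (b - 2 * a)) / D"
      "(x - y)\<^sup>2 = ((\<beta> + 2 * \<alpha>) * p - (b + 2 * a)) / D"
      using \<open>D \<noteq> 0\<close> unfolding power2_sum power2_diff mult.assoc xy
      by (simp_all add: field_simps)
    then have "x + y \<noteq> 0" "x - y \<noteq> 0"
      using that \<open>D \<noteq> 0\<close> by (auto simp: S_def)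
    from vanish[OF this] show ?thesis
      by (simp add: Q P binary_form_def atLeast0AtMost)
  qed
  then have "UNIV - S \<subseteq> {p. (\<Sum>i\<le>m. c i * p ^ i) = 0}"
    by blast
  moreover have "infinite (UNIV - S)"
    using \<open>finite S\<close> by (simp add: infinite_UNIV_char_0)
  ultimately have "infinite {p. (\<Sum>i\<le>m. c i * p ^ i) = 0}"
    using finite_subset by blast
  then show ?thesis
    using polyfun_finite_roots \<open>r \<le> m\<close> by blast
qed

definition expansion_coeffs ::
    "'a \<Rightarrow> 'a \<Rightarrow> 'a \<Rightarrow> 'a \<Rightarrow> nat \<Rightarrow> ('a \<Rightarrow> 'a \<Rightarrow> 'a) \<Rightarrow> ('a \<Rightarrow> 'a \<Rightarrow> 'a) \<Rightarrow> (nat \<Rightarrow> 'a::comm_ring_1) \<Rightarrow> bool"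
  where
  "expansion_coeffs a b \<alpha> \<beta> m E g c \<longleftrightarrow> (\<forall>r>m. c r = 0) \<and>
     (\<forall>x y. (\<beta> * a - \<alpha> * b) ^ m * g x y
              = E x y * binary_form c m (sym_quad \<alpha> \<beta> x y) (sym_quad a b x y))"

lemma ex_expansion_coeffsI:
  fixes a b \<alpha> \<beta> :: "'a::comm_ring_1"
  assumes "\<And>x y. g x y = E x y * G x y"
    and "is_binary_form m (sym_quad \<alpha> \<beta>) (sym_quad a b) (\<lambda>x y. (\<beta> * a - \<alpha> * b) ^ m * G x y)"
  shows "\<exists>c. expansion_coeffs a b \<alpha> \<beta> m E g c"
proof -
  obtain c where c: "\<And>x y. (\<beta> * a - \<alpha> * b) ^ m * G x y
                            = binary_form c m (sym_quad \<alpha> \<beta> x y) (sym_quad a b x y)"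
    using assms(2) unfolding is_binary_form_def by blast
  have "binary_form (\<lambda>r. if r \<le> m then c r else 0) m q p = binary_form c m q p" for q p :: 'a
    unfolding binary_form_def by (intro sum.cong) auto
  then have "expansion_coeffs a b \<alpha> \<beta> m E g (\<lambda>r. if r \<le> m then c r else 0)"
    unfolding expansion_coeffs_def by (simp add: assms(1) flip: c)
  then show ?thesis by blast
qed

lemma expansion_coeffs_unique:
  fixes a b \<alpha> \<beta> :: complex
  assumes D: "\<beta> * a - \<alpha> * b \<noteq> 0"
    and E: "\<And>x y. x + y \<noteq> 0 \<Longrightarrow> x - y \<noteq> 0 \<Longrightarrow> E x y \<noteq> 0"
    and c: "expansion_coeffs a b \<alpha> \<beta> m E g c" and d: "expansion_coeffs a b \<alpha> \<beta> m E g d"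
  shows "c = d"
proof
  fix r
  have "binary_form (\<lambda>r. c r - d r) m (sym_quad \<alpha> \<beta> x y) (sym_quad a b x y) = 0"
    if "x + y \<noteq> 0" "x - y \<noteq> 0" for x y
  proof -
    have "E x y * binary_form c m (sym_quad \<alpha> \<beta> x y) (sym_quad a b x y)
        = E x y * binary_form d m (sym_quad \<alpha> \<beta> x y) (sym_quad a b x y)"
      using c d unfolding expansion_coeffs_def by metis
    then show ?thesis
      using E[OF that] by (simp add: binary_form_diff)
  qed
  then have "r \<le> m \<Longrightarrow> c r - d r = 0"
    using binary_form_sym_quad_eq_0D[OF D] by fastforce
  then show "c r = d r"
    using c d unfolding expansion_coeffs_def by (cases "r \<le> m") auto
qed

lemma expansion_coeffs_taylor_shift:
  fixes a b \<alpha> \<beta> \<theta> :: "'a::comm_ring_1"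
  assumes "expansion_coeffs a b \<alpha> \<beta> m E g c"
  shows "expansion_coeffs (a - \<alpha> * \<theta>) (b - \<beta> * \<theta>) \<alpha> \<beta> m E g (taylor_shift \<theta> m c)"
proof -
  have "\<beta> * (a - \<alpha> * \<theta>) - \<alpha> * (b - \<beta> * \<theta>) = \<beta> * a - \<alpha> * b"
    by (simp add: algebra_simps)
  moreover have "sym_quad a b x y = sym_quad (a - \<alpha> * \<theta>) (b - \<beta> * \<theta>) x y + \<theta> * sym_quad \<alpha> \<beta> x y"
    for x y :: 'a
    by (simp add: sym_quad_def algebra_simps)
  ultimately show ?thesis
    using assms unfolding expansion_coeffs_def
    by (simp add: binary_form_taylor_shift taylor_shift_eq_0)
qed

lemma the_expansion_coeffs_eq:
  fixes a b \<alpha> \<beta> :: complex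
  assumes "\<beta> * a - \<alpha> * b \<noteq> 0"
    and "\<And>x y. x + y \<noteq> 0 \<Longrightarrow> x - y \<noteq> 0 \<Longrightarrow> E x y \<noteq> 0"
    and "expansion_coeffs a b \<alpha> \<beta> m E g c"
  shows "(THE c. expansion_coeffs a b \<alpha> \<beta> m E g c) = c"
  using assms expansion_coeffs_unique by blast

lemma the_expansion_coeffs_taylor_shift:
  fixes a b \<alpha> \<beta> \<theta> :: complex
  assumes D: "\<beta> * a - \<alpha> * b \<noteq> 0"
    and E: "\<And>x y. x + y \<noteq> 0 \<Longrightarrow> x - y \<noteq> 0 \<Longrightarrow> E x y \<noteq> 0"
    and "\<exists>c. expansion_coeffs a b \<alpha> \<beta> m E g c"
  shows "(THE c. expansion_coeffs (a - \<alpha> * \<theta>) (b - \<beta> * \<theta>) \<alpha> \<beta> m E g c)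
           = taylor_shift \<theta> m (THE c. expansion_coeffs a b \<alpha> \<beta> m E g c)"
proof -
  obtain c where c: "expansion_coeffs a b \<alpha> \<beta> m E g c"
    using assms(3) ..
  have "\<beta> * (a - \<alpha> * \<theta>) - \<alpha> * (b - \<beta> * \<theta>) \<noteq> 0"
    using D by (simp add: algebra_simps)
  then show ?thesis
    using the_expansion_coeffs_eq[OF D E c]
      the_expansion_coeffs_eq[OF _ E expansion_coeffs_taylor_shift[OF c]] by simp
qed

lemma Psi_eq_the_expansion_coeffs:
  "Psi a b \<alpha> \<beta> n
     = (THE c. expansion_coeffs a b \<alpha> \<beta> (n div 2) (\<lambda>x y. (x + y) ^ delta n) (\<lambda>x y. x ^ n + y ^ n) c)"
  unfolding Psi_def expansion_coeffs_def binary_form_def sym_quad_def by simp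

lemma Phi_eq_the_expansion_coeffs:
  "Phi a b \<alpha> \<beta> n
     = (THE c. expansion_coeffs a b \<alpha> \<beta> ((n - 1) div 2) (\<lambda>x y. (x - y) * (x + y) ^ delta (n - 1))
                 (\<lambda>x y. x ^ n - y ^ n) c)"
  unfolding Phi_def expansion_coeffs_def binary_form_def sym_quad_def by simp

lemma power_sum_expansion_coeffs_exist:
  fixes a b \<alpha> \<beta> :: "'a::comm_ring_1"
  shows "\<exists>c. expansion_coeffs a b \<alpha> \<beta> (n div 2) (\<lambda>x y. (x + y) ^ delta n) (\<lambda>x y. x ^ n + y ^ n) c"
proof (cases "even n")
  case True
  then obtain m where n: "n = 2 * m" ..
  have "is_binary_form m (sym_quad \<alpha> \<beta>) (sym_quad a b)
          (\<lambda>x y. (\<beta> * a - \<alpha> * b) ^ m * lucas_seq 2 (x\<^sup>2 + y\<^sup>2) (x\<^sup>2 + y\<^sup>2) ((x * y)\<^sup>2) m)"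
    by (rule is_binary_form_lucas_seq[where s = 1 and t = 0]) simp
  then show ?thesis
    by (intro ex_expansion_coeffsI) (simp_all add: n delta_def even_power_sum_lucas_seq)
next
  case False
  then obtain m where n: "n = 2 * m + 1" using oddE by blast
  have "is_binary_form m (sym_quad \<alpha> \<beta>) (sym_quad a b)
          (\<lambda>x y. (\<beta> * a - \<alpha> * b) ^ m * lucas_seq 1 (x\<^sup>2 + y\<^sup>2 - x * y) (x\<^sup>2 + y\<^sup>2) ((x * y)\<^sup>2) m)"
    by (rule is_binary_form_lucas_seq[where s = 1 and t = "-1"]) simp
  then show ?thesis
    by (intro ex_expansion_coeffsI) (simp_all only: n odd_power_sum_lucas_seq, simp_all add: delta_def)
qed

lemma power_diff_expansion_coeffs_exist:
  fixes a b \<alpha> \<beta> :: "'a::comm_ring_1"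
  assumes "n \<ge> 1"
  shows "\<exists>c. expansion_coeffs a b \<alpha> \<beta> ((n - 1) div 2) (\<lambda>x y. (x - y) * (x + y) ^ delta (n - 1))
              (\<lambda>x y. x ^ n - y ^ n) c"
proof (cases "odd n")
  case True
  then obtain m where n: "n = 2 * m + 1" using oddE by blast
  have "is_binary_form m (sym_quad \<alpha> \<beta>) (sym_quad a b)
          (\<lambda>x y. (\<beta> * a - \<alpha> * b) ^ m * lucas_seq 1 (x\<^sup>2 + y\<^sup>2 + x * y) (x\<^sup>2 + y\<^sup>2) ((x * y)\<^sup>2) m)"
    by (rule is_binary_form_lucas_seq[where s = 1 and t = 1]) simp
  then show ?thesis
    by (intro ex_expansion_coeffsI) (simp_all only: n odd_power_diff_lucas_seq, simp_all add: delta_def)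
next
  case False
  with assms obtain m where n: "n = 2 * m + 2"
    by (intro that[of "n div 2 - 1"]) presburger
  have "is_binary_form m (sym_quad \<alpha> \<beta>) (sym_quad a b)
          (\<lambda>x y. (\<beta> * a - \<alpha> * b) ^ m * lucas_seq 1 (x\<^sup>2 + y\<^sup>2) (x\<^sup>2 + y\<^sup>2) ((x * y)\<^sup>2) m)"
    by (rule is_binary_form_lucas_seq[where s = 1 and t = 0]) simp
  then show ?thesis
    by (intro ex_expansion_coeffsI) (simp_all only: n even_power_diff_lucas_seq, simp_all add: delta_def)
qed

lemma Psi_taylor_shift:
  assumes "\<beta> * a - \<alpha> * b \<noteq> 0"
  shows "Psi (a - \<alpha> * \<theta>) (b - \<beta> * \<theta>) \<alpha> \<beta> n = taylor_shift \<theta> (n div 2) (Psi a b \<alpha> \<beta> n)"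
  unfolding Psi_eq_the_expansion_coeffs
  by (rule the_expansion_coeffs_taylor_shift[OF assms _ power_sum_expansion_coeffs_exist]) simp

lemma Phi_taylor_shift:
  assumes "\<beta> * a - \<alpha> * b \<noteq> 0" and "n \<ge> 1"
  shows "Phi (a - \<alpha> * \<theta>) (b - \<beta> * \<theta>) \<alpha> \<beta> n = taylor_shift \<theta> ((n - 1) div 2) (Phi a b \<alpha> \<beta> n)"
  unfolding Phi_eq_the_expansion_coeffs
  by (rule the_expansion_coeffs_taylor_shift[OF assms(1) _ power_diff_expansion_coeffs_exist[OF assms(2)]]) simp

theorem theorem10p5:
  fixes a b \<alpha> \<beta> \<theta> :: complex and n k :: nat
  assumes "\<beta>*a - \<alpha>*b \<noteq> 0" and "n \<ge> 1"
  shows "(k \<le> n div 2 \<longrightarrow>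
            (\<Sum>r = k..n div 2. of_nat (r choose k) * Psi a b \<alpha> \<beta> n r * \<theta> ^ (r - k))
              = Psi (a - \<alpha>*\<theta>) (b - \<beta>*\<theta>) \<alpha> \<beta> n k)
       \<and> (k \<le> (n - 1) div 2 \<longrightarrow>
            (\<Sum>r = k..(n - 1) div 2. of_nat (r choose k) * Phi a b \<alpha> \<beta> n r * \<theta> ^ (r - k))
              = Phi (a - \<alpha>*\<theta>) (b - \<beta>*\<theta>) \<alpha> \<beta> n k)"
  using Psi_taylor_shift[OF assms(1)] Phi_taylor_shift[OF assms] by (simp add: taylor_shift_def)

end
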